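(* Let $(\lambda_n)_{n\ge0}$ be an increasing sequence of non-negative real numbers tending to infinity and let $(c_n)_{n\ge0}$ be complex numbers satisfying $$\sum_{\lambda_n\le x}\lambda_n|c_n|=O(x)\quad(x\to\infty).$$ Then $\sum_{n=0}^\infty c_n$ is $(\mathrm{L},\{\lambda_n\})$ summable (to $\ell$) if and only if it is $(\gamma,\{\lambda_n\},1)$ summable (to $\ell$).
   Context: Let $\gamma_1(x)=\frac{\sin x}{x}$ ($\gamma_1(0)=1$). The series $\sum c_n$ is $(\gamma,\{\lambda_n\},1)$ summable to $\ell$ if $\sum_{n=0}^\infty c_n\gamma_1(\lambda_nh)$ converges for all sufficiently small $h>0$ and $\lim_{h\to0^+}\sum_{n=0}^\infty c_n\gamma_1(\lambda_nh)=\ell$. It is $(\mathrm{L},\{\lambda_n\})$ summable to $\ell$ if it is $(\gamma,\{\lambda_n\},1)$ summable to $\ell$ and in addition $\sum_{\lambda_n>0}c_n\frac{e^{i\lambda_nh}}{\lambda_nh}$ converges for all sufficiently small $|h|>0$. *)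

theory Defs
  imports "HOL-Analysis.Analysis" "HOL-Library.Landau_Symbols"
begin

definition gamma1 :: "real \<Rightarrow> real" where
  "gamma1 x = (if x = 0 then 1 else sin x / x)"

definition gamma_summable :: "(nat \<Rightarrow> complex) \<Rightarrow> (nat \<Rightarrow> real) \<Rightarrow> complex \<Rightarrow> bool" where
  "gamma_summable c lam l \<longleftrightarrow>
     (\<exists>h0>0. \<forall>h. 0 < h \<and> h < h0 \<longrightarrow>
        summable (\<lambda>n. c n * complex_of_real (gamma1 (lam n * h)))) \<and>
     ((\<lambda>h. \<Sum>n. c n * complex_of_real (gamma1 (lam n * h))) \<longlongrightarrow> l) (at_right 0)"

definition L_summable :: "(nat \<Rightarrow> complex) \<Rightarrow> (nat \<Rightarrow> real) \<Rightarrow> complex \<Rightarrow> bool" where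
  "L_summable c lam l \<longleftrightarrow>
     gamma_summable c lam l \<and>
     (\<exists>h0>0. \<forall>h. 0 < \<bar>h\<bar> \<and> \<bar>h\<bar> < h0 \<longrightarrow>
        summable (\<lambda>n. if lam n > 0
                        then c n * exp (\<i> * complex_of_real (lam n * h)) / complex_of_real (lam n * h)
                        else 0))"

end

theory Submission
  imports Defs
begin

text \<open>The extra series in (L, lambda) summability is dominated termwise by
  |c n| / (lam n |h|), so it suffices that the series of |c n| / lam n = lam n |c n| / lam n^2
  converges. Split the positive lam n into dyadic blocks (a 2^(k-1), a 2^k]: by the linear bound
  C x + D on the partial sums of lam n |c n|, the k-th block contributes at most
  4 (C a 2^k + D) / (a 2^k)^2, and these contributions form a convergent geometric series.\<close>

lemma finite_le_of_filterlim_at_top: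
  fixes f :: "nat \<Rightarrow> real"
  assumes "filterlim f at_top sequentially"
  shows "finite {n. f n \<le> x}"
proof -
  from assms have "eventually (\<lambda>n. f n > x) sequentially"
    by (simp add: filterlim_at_top_dense)
  then obtain N where "\<forall>n\<ge>N. f n > x"
    by (auto simp: eventually_sequentially)
  then have "{n. f n \<le> x} \<subseteq> {..<N}"
    by (auto simp: not_less[symmetric])
  then show ?thesis
    using finite_subset by blast
qed

lemma mono_bigo_linear_bound:
  fixes f :: "real \<Rightarrow> real"
  assumes "mono f" and "\<And>x. f x \<ge> 0" and "f \<in> O(\<lambda>x. x)"
  obtains C D where "C \<ge> 0" "D \<ge> 0" "\<And>x. x \<ge> 0 \<Longrightarrow> f x \<le> C * x + D"
proof -
  from \<open>f \<in> O(\<lambda>x. x)\<close> obtain C where C: "C > 0" "eventually (\<lambda>x. norm (f x) \<le> C * norm x) at_top"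
    by (elim landau_o.bigE) auto
  then obtain x0 where x0: "\<And>x. x \<ge> x0 \<Longrightarrow> norm (f x) \<le> C * norm x"
    by (auto simp: eventually_at_top_linorder)
  have "f x \<le> C * x + f x0" if "x \<ge> 0" for x
  proof (cases "x \<ge> x0")
    case True
    then show ?thesis
      using x0[of x] that assms(2)[of x0] by simp
  next
    case False
    then have "f x \<le> f x0"
      using \<open>mono f\<close> by (simp add: monoD)
    then show ?thesis
      using C that by (simp add: add_increasing)
  qed
  then show ?thesis
    using that[of C "f x0"] C assms(2) by simp
qed

lemma inverse_square_le_dyadic_sum:
  fixes a x :: real and K :: nat
  assumes a: "a > 0" and xa: "x \<ge> a" and xK: "x \<le> a * 2^K"
  shows "1 / x\<^sup>2 \<le> 4 * (\<Sum>k<Suc K. if x \<le> a * 2^k then 1 / (a\<^sup>2 * 4^k) else 0)"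
proof -
  define k0 where "k0 = (LEAST k. x \<le> a * 2^k)"
  have k0: "x \<le> a * 2^k0"
    unfolding k0_def by (rule LeastI[of _ K]) (rule xK)
  have k0K: "k0 \<le> K"
    unfolding k0_def by (rule Least_le) (rule xK)
  have "a * 2^k0 \<le> 2 * x"
  proof (cases k0)
    case 0
    then show ?thesis using xa a by simp
  next
    case (Suc j)
    have "\<not> x \<le> a * 2^j"
      using Suc k0_def not_less_Least[of j "\<lambda>k. x \<le> a * 2^k"] by simp
    then show ?thesis using Suc by simp
  qed
  then have "(a * 2^k0)\<^sup>2 \<le> (2 * x)\<^sup>2"
    using a by (intro power_mono) auto
  moreover have "(2::real)^k0 * 2^k0 = 4^k0"
    by (simp add: power_mult_distrib[symmetric])
  ultimately have "a\<^sup>2 * 4^k0 \<le> 4 * x\<^sup>2"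
    by (simp add: power2_eq_square algebra_simps)
  then have "1 / x\<^sup>2 \<le> 4 * (1 / (a\<^sup>2 * 4^k0))"
    using a xa by (simp add: field_simps)
  also have "1 / (a\<^sup>2 * 4^k0) \<le> (\<Sum>k<Suc K. if x \<le> a * 2^k then 1 / (a\<^sup>2 * 4^k) else 0)"
    using member_le_sum[of k0 "{..<Suc K}" "\<lambda>k. if x \<le> a * 2^k then 1 / (a\<^sup>2 * 4^k) else (0::real)"]
      k0 k0K by auto
  finally show ?thesis by simp
qed

lemma dyadic_linear_sum_le:
  fixes a C D :: real and K :: nat
  assumes "a > 0" "C \<ge> 0" "D \<ge> 0"
  shows "(\<Sum>k<K. (C * (a * 2^k) + D) / (a\<^sup>2 * 4^k)) \<le> 2 * (C / a + D / a\<^sup>2)"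
proof -
  have term_le: "(C * (a * 2^k) + D) / (a\<^sup>2 * 4^k) \<le> (C / a + D / a\<^sup>2) * (1/2)^k" for k
  proof -
    have four: "(4::real)^k = 2^k * 2^k"
      by (simp add: power_mult_distrib[symmetric])
    have "(C * (a * 2^k) + D) / (a\<^sup>2 * 4^k) = (C / a) * (1/2)^k + (D / a\<^sup>2) * (1/4)^k"
      using assms by (simp add: field_simps power_divide power2_eq_square four)
    also have "(D / a\<^sup>2) * (1/4)^k \<le> (D / a\<^sup>2) * (1/2)^k"
      using assms by (intro mult_left_mono power_mono) auto
    finally show ?thesis by (simp add: algebra_simps)
  qed
  have "(\<Sum>k<K. (1/2::real)^k) \<le> (\<Sum>k. (1/2::real)^k)"
    by (rule sum_le_suminf) (auto intro: summable_geometric)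
  also have "\<dots> = 2"
    using suminf_geometric[of "1/2::real"] by simp
  finally have "(C / a + D / a\<^sup>2) * (\<Sum>k<K. (1/2)^k) \<le> (C / a + D / a\<^sup>2) * 2"
    using assms by (intro mult_left_mono) auto
  moreover have "(\<Sum>k<K. (C * (a * 2^k) + D) / (a\<^sup>2 * 4^k)) \<le> (C / a + D / a\<^sup>2) * (\<Sum>k<K. (1/2)^k)"
    unfolding sum_distrib_left by (rule sum_mono) (rule term_le)
  ultimately show ?thesis by (simp add: mult.commute)
qed

lemma summable_div_square_of_linear_bound:
  fixes lam t :: "nat \<Rightarrow> real" and a C D :: real
  assumes a: "a > 0" and lam_ge: "\<And>n. lam n \<ge> a" and t_nonneg: "\<And>n. t n \<ge> 0"
    and C: "C \<ge> 0" and D: "D \<ge> 0"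
    and bound: "\<And>N x. x \<ge> 0 \<Longrightarrow> (\<Sum>n | n < N \<and> lam n \<le> x. t n) \<le> C * x + D"
  shows "summable (\<lambda>n. t n / (lam n)\<^sup>2)"
proof (rule summableI_nonneg_bounded)
  show "0 \<le> t n / (lam n)\<^sup>2" for n
    using t_nonneg by simp
  fix N
  define w where "w k = 1 / (a\<^sup>2 * 4^k)" for k :: nat
  obtain K where K: "(\<Sum>n<N. lam n) / a < 2^K"
    using real_arch_pow[of 2] by auto
  have lam_le: "lam n \<le> a * 2^K" if "n < N" for n
  proof -
    have "lam n \<le> (\<Sum>n<N. lam n)"
      using that lam_ge a by (intro member_le_sum) (auto intro: order_trans[OF less_imp_le[OF a]])
    then show ?thesis
      using K a by (simp add: field_simps)
  qed
  have "(\<Sum>n<N. t n / (lam n)\<^sup>2)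
        \<le> (\<Sum>n<N. t n * (4 * (\<Sum>k<Suc K. if lam n \<le> a * 2^k then w k else 0)))"
  proof (rule sum_mono)
    fix n assume "n \<in> {..<N}"
    then have "1 / (lam n)\<^sup>2 \<le> 4 * (\<Sum>k<Suc K. if lam n \<le> a * 2^k then w k else 0)"
      unfolding w_def using inverse_square_le_dyadic_sum[OF a lam_ge lam_le] by simp
    then show "t n / (lam n)\<^sup>2 \<le> t n * (4 * (\<Sum>k<Suc K. if lam n \<le> a * 2^k then w k else 0))"
      using mult_left_mono[OF _ t_nonneg, of "1 / (lam n)\<^sup>2"] by simp
  qed
  also have "\<dots> = 4 * (\<Sum>n<N. \<Sum>k<Suc K. w k * (if lam n \<le> a * 2^k then t n else 0))"
    by (simp add: sum_distrib_left if_distrib mult_ac del: sum.lessThan_Suc cong: if_cong)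
  also have "\<dots> = 4 * (\<Sum>k<Suc K. w k * (\<Sum>n | n < N \<and> lam n \<le> a * 2^k. t n))"
    by (subst sum.swap) (simp add: sum_distrib_left[symmetric] sum.inter_filter[symmetric] conj_commute
        del: sum.lessThan_Suc)
  also have "\<dots> \<le> 4 * (\<Sum>k<Suc K. (C * (a * 2^k) + D) / (a\<^sup>2 * 4^k))"
  proof -
    have "w k * (\<Sum>n | n < N \<and> lam n \<le> a * 2^k. t n) \<le> w k * (C * (a * 2^k) + D)" for k
      unfolding w_def using bound a by (intro mult_left_mono) auto
    then show ?thesis
      unfolding w_def by (intro mult_left_mono sum_mono) auto
  qed
  also have "\<dots> \<le> 4 * (2 * (C / a + D / a\<^sup>2))"
    using dyadic_linear_sum_le[OF a C D, of "Suc K"] by (simp del: sum.lessThan_Suc)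
  finally show "(\<Sum>n<N. t n / (lam n)\<^sup>2) \<le> 8 * (C / a + D / a\<^sup>2)"
    by simp
qed

lemma summable_norm_div_of_bigo:
  fixes lam :: "nat \<Rightarrow> real" and c :: "nat \<Rightarrow> complex"
  assumes mono: "strict_mono lam" and nonneg: "\<And>n. lam n \<ge> 0"
    and lim: "filterlim lam at_top sequentially"
    and bigo: "(\<lambda>x::real. \<Sum>n\<in>{n. lam n \<le> x}. lam n * norm (c n)) \<in> O(\<lambda>x. x)"
  shows "summable (\<lambda>n. if lam n > 0 then norm (c n) / lam n else 0)"
proof -
  define S where "S x = (\<Sum>n\<in>{n. lam n \<le> x}. lam n * norm (c n))" for x
  have finite: "finite {n. lam n \<le> x}" for x
    using finite_le_of_filterlim_at_top[OF lim] .
  have "mono S"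
    unfolding S_def by (intro monoI sum_mono2) (use finite nonneg in auto)
  moreover have "S x \<ge> 0" for x
    unfolding S_def by (simp add: sum_nonneg nonneg)
  ultimately obtain C D where C: "C \<ge> 0" and D: "D \<ge> 0" and S_le: "\<And>x. x \<ge> 0 \<Longrightarrow> S x \<le> C * x + D"
    using mono_bigo_linear_bound bigo unfolding S_def[abs_def] by blast
  \<comment> \<open>lam 0 may vanish, so the estimate is applied to the shifted sequence.\<close>
  define a where "a = lam 1"
  have a: "a > 0"
    unfolding a_def using strict_monoD[OF mono, of 0 1] nonneg[of 0] by simp
  have lam_ge: "lam (Suc n) \<ge> a" for n
    unfolding a_def using mono by (simp add: strict_mono_less_eq)
  have "(\<Sum>n | n < N \<and> lam (Suc n) \<le> x. lam (Suc n) * norm (c (Suc n))) \<le> C * x + D"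
    if "x \<ge> 0" for N x
  proof -
    have "(\<Sum>n | n < N \<and> lam (Suc n) \<le> x. lam (Suc n) * norm (c (Suc n)))
          = (\<Sum>n \<in> Suc ` {n. n < N \<and> lam (Suc n) \<le> x}. lam n * norm (c n))"
      by (simp add: sum.reindex)
    also have "\<dots> \<le> S x"
      unfolding S_def by (rule sum_mono2) (use finite nonneg in auto)
    finally show ?thesis
      using S_le[OF that] by simp
  qed
  then have "summable (\<lambda>n. lam (Suc n) * norm (c (Suc n)) / (lam (Suc n))\<^sup>2)"
    using summable_div_square_of_linear_bound[OF a lam_ge _ C D] nonneg by simp
  moreover have "lam (Suc n) * norm (c (Suc n)) / (lam (Suc n))\<^sup>2
      = (if lam (Suc n) > 0 then norm (c (Suc n)) / lam (Suc n) else 0)" for n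
    using lam_ge[of n] a by (simp add: power2_eq_square)
  ultimately show ?thesis
    by (subst summable_Suc_iff[symmetric]) simp
qed

lemma summable_L_series_of_summable_norm_div:
  fixes lam :: "nat \<Rightarrow> real" and c :: "nat \<Rightarrow> complex"
  assumes "summable (\<lambda>n. if lam n > 0 then norm (c n) / lam n else 0)" and "h \<noteq> 0"
  shows "summable (\<lambda>n. if lam n > 0
                        then c n * exp (\<i> * complex_of_real (lam n * h)) / complex_of_real (lam n * h)
                        else 0)"
proof (rule summable_comparison_test[OF _ summable_mult2[OF assms(1), of "1 / \<bar>h\<bar>"]])
  have "norm (c n * exp (\<i> * complex_of_real (lam n * h)) / complex_of_real (lam n * h))
        = norm (c n) / lam n * (1 / \<bar>h\<bar>)" if "lam n > 0" for n
    using that by (simp add: norm_divide norm_mult abs_mult)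
  then show "\<exists>N. \<forall>n\<ge>N. norm (if lam n > 0
                        then c n * exp (\<i> * complex_of_real (lam n * h)) / complex_of_real (lam n * h)
                        else 0) \<le> (if lam n > 0 then norm (c n) / lam n else 0) * (1 / \<bar>h\<bar>)"
    by simp
qed

theorem proposition2p1:
  fixes lam :: "nat \<Rightarrow> real" and c :: "nat \<Rightarrow> complex"
  assumes "strict_mono lam"
    and "\<And>n. lam n \<ge> 0"
    and "filterlim lam at_top sequentially"
    and "(\<lambda>x::real. \<Sum>n\<in>{n. lam n \<le> x}. lam n * norm (c n)) \<in> O(\<lambda>x. x)"
  shows "L_summable c lam l \<longleftrightarrow> gamma_summable c lam l"
proof
  assume "L_summable c lam l"
  then show "gamma_summable c lam l"
    by (simp add: L_summable_def)
next
  assume "gamma_summable c lam l"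
  moreover have "summable (\<lambda>n. if lam n > 0 then norm (c n) / lam n else 0)"
    using summable_norm_div_of_bigo[OF assms] .
  ultimately show "L_summable c lam l"
    unfolding L_summable_def
    by (auto intro!: exI[of _ 1] summable_L_series_of_summable_norm_div)
qed

end
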